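(* For $i=1,2$ let $\alpha_i\in[-1,1]$ and let $f_{\alpha_i}=h_{\alpha_i}+\overline{g_{\alpha_i}}\in S_H$ with $h_{\alpha_i}(z)+g_{\alpha_i}(z)=\dfrac{z(1-\alpha_i z)}{1-z^2}$ for $z\in E$. Let $0\le t\le 1$ and $f=tf_{\alpha_1}+(1-t)f_{\alpha_2}$. If $f$ is locally univalent and sense-preserving in $E$, then $f\in S_H$ and $f$ maps $E$ onto a domain convex in the direction of the imaginary axis.
   Context: $E=\{z\in\mathbb{C}:|z|<1\}$. A harmonic mapping $f=h+\overline{g}$ on $E$ (with $h,g$ analytic) is locally univalent and sense-preserving iff $h'\neq0$ in $E$ and its dilatation $\omega=g'/h'$ satisfies $|\omega|<1$ in $E$. $S_H$ denotes the class of harmonic, univalent, sense-preserving mappings $f=h+\overline{g}$ of $E$ normalized by $f(0)=0$, $f_z(0)=1$. A domain $\Omega$ is convex in the direction of the imaginary axis if every line parallel to the imaginary axis has connected or empty intersection with $\Omega$. *)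

theory Defs
  imports "HOL-Analysis.Analysis"
begin

definition unit_disc :: "complex set" ("\<E>") where
  "unit_disc = ball 0 1"

definition harm :: "(complex \<Rightarrow> complex) \<Rightarrow> (complex \<Rightarrow> complex) \<Rightarrow> complex \<Rightarrow> complex" where
  "harm h g = (\<lambda>z. h z + cnj (g z))"

definition loc_univ_sense_pres :: "(complex \<Rightarrow> complex) \<Rightarrow> (complex \<Rightarrow> complex) \<Rightarrow> bool" where
  "loc_univ_sense_pres h g \<longleftrightarrow>
     (\<forall>z\<in>\<E>. deriv h z \<noteq> 0 \<and> norm (deriv g z / deriv h z) < 1)"

definition in_S_H :: "(complex \<Rightarrow> complex) \<Rightarrow> (complex \<Rightarrow> complex) \<Rightarrow> bool" where
  "in_S_H h g \<longleftrightarrow>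
     h holomorphic_on \<E> \<and> g holomorphic_on \<E> \<and>
     inj_on (harm h g) \<E> \<and> loc_univ_sense_pres h g \<and>
     harm h g 0 = 0 \<and> deriv h 0 = 1"

definition convex_imag_dir :: "complex set \<Rightarrow> bool" where
  "convex_imag_dir \<Omega> \<longleftrightarrow> (\<forall>x::real. connected (\<Omega> \<inter> {w. Re w = x}))"

end

theory Submission
  imports Defs "HOL-Complex_Analysis.Conformal_Mappings"
begin

text \<open>
  Put \<open>P = h + g\<close>, so that \<open>Re f = Re P\<close> and \<open>Im f = Im (h - g)\<close>. If \<open>P\<close> is univalent on
  \<open>E\<close> and \<open>P(E)\<close> is convex in the vertical direction, then along every vertical segment of
  \<open>P(E)\<close> the function \<open>Im ((h - g) \<circ> P\<^sup>-\<^sup>1)\<close> is strictly increasing, because its vertical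
  derivative is \<open>Re ((h' - g') / (h' + g')) > 0\<close> by \<open>|g'/h'| < 1\<close>. Hence \<open>f\<close> is univalent and maps
  each vertical slice of \<open>P(E)\<close> continuously onto the corresponding slice of \<open>f(E)\<close>
  (the shear construction of Clunie and Sheil-Small).

  For the convex combination one has \<open>h + g = z (1 - \<alpha> z) / (1 - z\<^sup>2)\<close> with
  \<open>\<alpha> = t \<alpha>\<^sub>1 + (1 - t) \<alpha>\<^sub>2 \<in> [-1, 1]\<close>. In the coordinate \<open>w = (1 + z) / (1 - z)\<close> of the right
  half-plane, \<open>2 (h + g) - \<alpha>\<close> becomes \<open>a w - b / w\<close> with \<open>a = (1 - \<alpha>) / 2\<close>, \<open>b = (1 + \<alpha>) / 2\<close>.
  This map is univalent on the half-plane, and its image is a half-plane if \<open>a b = 0\<close> and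
  otherwise the plane minus the two slits \<open>{i y | y\<^sup>2 \<ge> 4 a b}\<close>; both are convex in the
  vertical direction.
\<close>

section \<open>Convexity in the direction of the imaginary axis\<close>

lemma convex_imag_dir_vertical_between:
  assumes "convex_imag_dir S" "u \<in> S" "v \<in> S" "Re u = Re v" "Im u \<le> s" "s \<le> Im v"
  shows "Complex (Re u) s \<in> S"
proof -
  have "connected (S \<inter> {w. Re w = Re u})"
    using assms(1) unfolding convex_imag_dir_def by blast
  then have "\<exists>z \<in> S \<inter> {w. Re w = Re u}. z \<bullet> \<i> = s"
    by (rule connected_ivt_component[where x = u and y = v]) (use assms(2-6) in auto)
  then obtain z where "z \<in> S" "Re z = Re u" "Im z = s"
    by auto
  moreover from this have "z = Complex (Re u) s"
    by (simp add: complex_eq_iff)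
  ultimately show ?thesis
    by simp
qed

lemma convex_imag_dir_if_convex_slices:
  assumes "\<And>x. convex (S \<inter> {w. Re w = x})"
  shows "convex_imag_dir S"
  using assms convex_connected unfolding convex_imag_dir_def by blast

lemma convex_imag_dir_affinity:
  fixes c :: complex and r :: real
  assumes "r \<noteq> 0" "convex_imag_dir S"
  shows "convex_imag_dir ((\<lambda>w. c + r *\<^sub>R w) ` S)"
  unfolding convex_imag_dir_def
proof
  fix x
  have slice: "(\<lambda>w. c + r *\<^sub>R w) ` S \<inter> {w. Re w = x}
      = (\<lambda>w. c + r *\<^sub>R w) ` (S \<inter> {w. Re w = (x - Re c) / r})"
    using assms(1) by (force simp: field_simps)
  have "connected (S \<inter> {w. Re w = (x - Re c) / r})"
    using assms(2) unfolding convex_imag_dir_def by blast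
  then show "connected ((\<lambda>w. c + r *\<^sub>R w) ` S \<inter> {w. Re w = x})"
    unfolding slice by (intro connected_continuous_image continuous_intros)
qed

section \<open>The Cayley transform\<close>

definition cayley :: "complex \<Rightarrow> complex" where
  "cayley z = (1 + z) / (1 - z)"

lemma cayley_Re_pos:
  assumes "norm z < 1"
  shows "0 < Re (cayley z)"
proof -
  have "Re z < 1"
    using assms abs_Re_le_cmod[of z] by linarith
  then have "0 < (1 - Re z)\<^sup>2 + (Im z)\<^sup>2"
    by (simp add: add_pos_nonneg)
  moreover have "(Re z)\<^sup>2 + (Im z)\<^sup>2 < 1"
    using assms by (simp add: cmod_def)
  ultimately show ?thesis
    by (simp add: cayley_def Re_divide power2_eq_square algebra_simps)
qed

lemma bij_betw_cayley: "bij_betw cayley \<E> {w. 0 < Re w}"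
proof (rule bij_betw_byWitness[where f' = "\<lambda>w. (w - 1) / (w + 1)"])
  show "\<forall>z\<in>\<E>. (cayley z - 1) / (cayley z + 1) = z"
  proof
    fix z assume "z \<in> \<E>"
    then have "1 - z \<noteq> 0"
      by (auto simp: unit_disc_def)
    then show "(cayley z - 1) / (cayley z + 1) = z"
      by (simp add: cayley_def field_simps)
  qed
  show "\<forall>w\<in>{w. 0 < Re w}. cayley ((w - 1) / (w + 1)) = w"
  proof
    fix w :: complex assume "w \<in> {w. 0 < Re w}"
    then have "w + 1 \<noteq> 0"
      by (auto simp: complex_eq_iff)
    then have "1 + (w - 1) / (w + 1) = 2 * w / (w + 1)" "1 - (w - 1) / (w + 1) = 2 / (w + 1)"
      by (simp_all add: field_simps)
    with \<open>w + 1 \<noteq> 0\<close> show "cayley ((w - 1) / (w + 1)) = w"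
      by (simp add: cayley_def)
  qed
  show "cayley ` \<E> \<subseteq> {w. 0 < Re w}"
    using cayley_Re_pos by (auto simp: unit_disc_def)
  show "(\<lambda>w. (w - 1) / (w + 1)) ` {w. 0 < Re w} \<subseteq> \<E>"
  proof clarify
    fix w :: complex assume "0 < Re w"
    then have "norm (w - 1) < norm (w + 1)"
      by (simp add: cmod_def power2_eq_square algebra_simps)
    then show "(w - 1) / (w + 1) \<in> \<E>"
      by (simp add: unit_disc_def norm_divide divide_less_eq)
  qed
qed

section \<open>The maps \<open>w \<mapsto> a w - b / w\<close> on the right half-plane\<close>

definition phi :: "real \<Rightarrow> real \<Rightarrow> complex \<Rightarrow> complex" where
  "phi a b w = of_real a * w - of_real b / w"

lemma Re_mult_pos_if_Im_eq_0:
  fixes u v :: complex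
  assumes "0 < Re u" "0 < Re v" "Im (u * v) = 0"
  shows "0 < Re (u * v)"
proof -
  have "Re u * Im v = - (Im u * Re v)"
    using assms(3) by (simp add: algebra_simps)
  then have "Re u * Re (u * v) = Re v * ((Re u)\<^sup>2 + (Im u)\<^sup>2)"
    by (simp add: power2_eq_square algebra_simps)
  moreover have "0 < Re v * ((Re u)\<^sup>2 + (Im u)\<^sup>2)"
    using assms by (simp add: add_pos_nonneg)
  ultimately show ?thesis
    using assms(1) by (metis zero_less_mult_pos)
qed

lemma inj_on_phi:
  assumes "0 \<le> a" "0 \<le> b" "0 < a + b"
  shows "inj_on (phi a b) {w. 0 < Re w}"
proof (rule inj_onI)
  fix w1 w2 assume w: "w1 \<in> {w. 0 < Re w}" "w2 \<in> {w. 0 < Re w}" "phi a b w1 = phi a b w2"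
  then have "w1 \<noteq> 0" "w2 \<noteq> 0"
    by auto
  with w(3) have "(w1 - w2) * (of_real a * (w1 * w2) + of_real b) = 0"
    by (simp add: phi_def field_simps)
  moreover have "of_real a * (w1 * w2) + of_real b \<noteq> 0"
  proof
    assume "of_real a * (w1 * w2) + of_real b = 0"
    then have re: "a * Re (w1 * w2) + b = 0" and im: "a * Im (w1 * w2) = 0"
      by (simp_all add: complex_eq_iff)
    show False
    proof (cases "a = 0")
      case True
      with re assms(3) show False
        by simp
    next
      case False
      with im have "0 < Re (w1 * w2)"
        using Re_mult_pos_if_Im_eq_0 w(1,2) by simp
      with False re assms(1,2) show False
        by (smt (verit) mult_pos_pos)
    qed
  qed
  ultimately show "w1 = w2"
    by simp
qed

lemma phi_Im_sq_less_if_Re_eq_0: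
  assumes "0 < a" "0 < b" "0 < Re w" "Re (phi a b w) = 0"
  shows "(Im (phi a b w))\<^sup>2 < 4 * a * b"
proof -
  define n where "n = (Re w)\<^sup>2 + (Im w)\<^sup>2"
  have n: "0 < n"
    using assms(3) unfolding n_def by (simp add: add_pos_nonneg)
  have re: "Re (phi a b w) = a * Re w - b * Re w / n"
    by (simp add: phi_def n_def Re_divide)
  have im: "Im (phi a b w) = a * Im w + b * Im w / n"
    by (simp add: phi_def n_def Im_divide)
  from assms(3,4) n have an: "a * n = b"
    unfolding re by (simp add: field_simps)
  with n have "Im (phi a b w) = 2 * a * Im w"
    unfolding im by (simp add: field_simps)
  then have "(Im (phi a b w))\<^sup>2 = 4 * a * (a * (Im w)\<^sup>2)"
    by (simp add: power2_eq_square)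
  also have "\<dots> < 4 * a * b"
    unfolding an[symmetric] n_def using assms(1,3) by simp
  finally show ?thesis .
qed

lemma quadratic_root_on_imaginary_axis:
  assumes "0 < a" "0 < b" "of_real a * w\<^sup>2 - z * w - of_real b = 0" "Re w = 0"
  shows "Re z = 0 \<and> 4 * a * b \<le> (Im z)\<^sup>2"
proof -
  define y where "y = Im w"
  have "of_real a * (\<i> * of_real y)\<^sup>2 - z * (\<i> * of_real y) - of_real b = 0"
    using assms(3,4) unfolding y_def by (metis Complex_eq complex_surj mult_zero_right of_real_0 add_0)
  then have re: "Im w * Im z = a * (Im w)\<^sup>2 + b" and im: "Im w * Re z = 0"
    unfolding y_def[symmetric] by (simp_all add: complex_eq_iff power2_eq_square algebra_simps)
  have "Im w \<noteq> 0"
    using re assms(1,2) by auto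
  with im have "Re z = 0"
    by simp
  have "4 * a * b * (Im w)\<^sup>2 \<le> (a * (Im w)\<^sup>2 + b)\<^sup>2"
    using sum_squares_ge_zero[of "a * (Im w)\<^sup>2 - b" 0]
    by (simp add: power2_eq_square algebra_simps)
  also have "\<dots> = (Im w)\<^sup>2 * (Im z)\<^sup>2"
    unfolding re[symmetric] by (simp add: power_mult_distrib)
  finally have "(Im w)\<^sup>2 * (4 * a * b) \<le> (Im w)\<^sup>2 * (Im z)\<^sup>2"
    by (simp add: mult.commute)
  with \<open>Im w \<noteq> 0\<close> \<open>Re z = 0\<close> show ?thesis
    by simp
qed

lemma quadratic_factorization:
  fixes A B z :: complex
  assumes "A \<noteq> 0"
  obtains w1 w2 where "\<And>w. A * w\<^sup>2 - z * w - B = A * (w - w1) * (w - w2)"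
proof -
  define d where "d = csqrt (z\<^sup>2 + 4 * A * B)"
  have "A * w\<^sup>2 - z * w - B = A * (w - (z + d) / (2 * A)) * (w - (z - d) / (2 * A))" for w
  proof -
    have "4 * A * (A * (w - (z + d) / (2 * A)) * (w - (z - d) / (2 * A)))
        = (2 * A * w - (z + d)) * (2 * A * w - (z - d))"
      using assms by (simp add: field_simps)
    also have "\<dots> = (2 * A * w - z)\<^sup>2 - d\<^sup>2"
      by (simp add: power2_eq_square algebra_simps)
    also have "\<dots> = 4 * A * (A * w\<^sup>2 - z * w - B)"
      by (simp add: d_def) (simp add: power2_eq_square algebra_simps)
    finally show ?thesis
      using assms by simp
  qed
  then show ?thesis
    using that by blast
qed

lemma phi_surj_off_slits:
  assumes "0 < a" "0 < b" "\<not> (Re z = 0 \<and> 4 * a * b \<le> (Im z)\<^sup>2)"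
  shows "\<exists>w. 0 < Re w \<and> phi a b w = z"
proof -
  have a: "complex_of_real a \<noteq> 0"
    using assms(1) by simp
  obtain w1 w2 where factor: "\<And>w. of_real a * w\<^sup>2 - z * w - of_real b = of_real a * (w - w1) * (w - w2)"
    using quadratic_factorization[OF a] by blast
  have roots: "of_real a * w1\<^sup>2 - z * w1 - of_real b = 0" "of_real a * w2\<^sup>2 - z * w2 - of_real b = 0"
    by (simp_all add: factor)
  have "- of_real b = of_real a * w1 * w2"
    using factor[of 0] by simp
  then have prod: "(- w1) * (- w2) = - of_real (b / a)"
    using a by (simp add: field_simps)
  have sol: "phi a b w = z" if "of_real a * w\<^sup>2 - z * w - of_real b = 0" for w
  proof -
    have "w \<noteq> 0"
      using that assms(2) by auto
    with that show ?thesis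
      by (simp add: phi_def field_simps power2_eq_square)
  qed
  have "0 < Re w1 \<or> 0 < Re w2"
  proof (rule ccontr)
    assume "\<not> ?thesis"
    moreover have "Re w1 \<noteq> 0" "Re w2 \<noteq> 0"
      using quadratic_root_on_imaginary_axis[OF assms(1,2)] roots assms(3) by blast+
    ultimately have "0 < Re (- w1)" "0 < Re (- w2)"
      by auto
    moreover have "Im ((- w1) * (- w2)) = 0"
      unfolding prod by simp
    ultimately have "0 < Re ((- w1) * (- w2))"
      by (rule Re_mult_pos_if_Im_eq_0)
    moreover have "0 < b / a"
      using assms(1,2) by simp
    ultimately show False
      unfolding prod by simp
  qed
  with roots sol show ?thesis
    by blast
qed

lemma phi_image_slit:
  assumes "0 < a" "0 < b"
  shows "phi a b ` {w. 0 < Re w} = - {z. Re z = 0 \<and> 4 * a * b \<le> (Im z)\<^sup>2}"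
  using phi_Im_sq_less_if_Re_eq_0[OF assms] phi_surj_off_slits[OF assms] by fastforce

lemma phi_image_left_half_plane:
  assumes "0 < b"
  shows "phi 0 b ` {w. 0 < Re w} = {z. Re z < 0}"
proof -
  have Re: "Re (phi 0 b w) = - b * Re w / ((Re w)\<^sup>2 + (Im w)\<^sup>2)" for w
    by (simp add: phi_def Re_divide)
  have "0 < Re (phi 0 b w) \<longleftrightarrow> Re w < 0" "Re (phi 0 b w) < 0 \<longleftrightarrow> 0 < Re w" for w
    unfolding Re using assms
    by (auto simp: zero_less_divide_iff divide_less_0_iff mult_less_0_iff zero_less_mult_iff
        sum_power2_gt_zero_iff not_sum_power2_lt_zero)
  moreover have "phi 0 b (phi 0 b z) = z" for z
    using assms by (cases "z = 0") (simp_all add: phi_def)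
  ultimately show ?thesis
    by (auto intro: image_eqI[where x = "phi 0 b _"])
qed

lemma phi_image_right_half_plane:
  assumes "0 < a"
  shows "phi a 0 ` {w. 0 < Re w} = {z. 0 < Re z}"
proof -
  have "phi a 0 (z / of_real a) = z" for z
    using assms by (simp add: phi_def)
  then show ?thesis
    using assms by (force simp: phi_def zero_less_mult_iff intro: image_eqI[where x = "_ / of_real a"])
qed

lemma convex_imag_dir_phi_image:
  assumes "0 \<le> a" "0 \<le> b" "0 < a + b"
  shows "convex_imag_dir (phi a b ` {w. 0 < Re w})"
proof (rule convex_imag_dir_if_convex_slices)
  fix x
  have line: "convex {w. Re w = x}"
    using convex_hyperplane[of "1 :: complex" x] by simp
  consider "a = 0" | "b = 0" | "0 < a" "0 < b"
    using assms by linarith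
  then show "convex (phi a b ` {w. 0 < Re w} \<inter> {w. Re w = x})"
  proof cases
    case 1
    with assms show ?thesis
      by (simp add: phi_image_left_half_plane convex_Int[OF convex_halfspace_Re_lt line])
  next
    case 2
    with assms show ?thesis
      by (simp add: phi_image_right_half_plane convex_Int[OF convex_halfspace_Re_gt line])
  next
    case 3
    show ?thesis
    proof (cases "x = 0")
      case True
      define r where "r = sqrt (4 * a * b)"
      have "y\<^sup>2 < 4 * a * b \<longleftrightarrow> - r < y \<and> y < r" for y
        using real_sqrt_less_iff[of "y\<^sup>2" "4 * a * b"] unfolding r_def by (auto simp: abs_less_iff)
      then have "{w. (Im w)\<^sup>2 < 4 * a * b} = {w. - r < Im w} \<inter> {w. Im w < r}"
        by blast
      moreover have "phi a b ` {w. 0 < Re w} \<inter> {w. Re w = x} = {w. (Im w)\<^sup>2 < 4 * a * b} \<inter> {w. Re w = x}"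
        using 3 True by (auto simp: phi_image_slit)
      ultimately show ?thesis
        by (simp add: convex_Int convex_halfspace_Im_gt convex_halfspace_Im_lt line)
    next
      case False
      then have "phi a b ` {w. 0 < Re w} \<inter> {w. Re w = x} = {w. Re w = x}"
        using 3 by (auto simp: phi_image_slit)
      with line show ?thesis
        by simp
    qed
  qed
qed

section \<open>The analytic sums \<open>z (1 - \<alpha> z) / (1 - z\<^sup>2)\<close>\<close>

definition p_alpha :: "real \<Rightarrow> complex \<Rightarrow> complex" where
  "p_alpha \<alpha> z = z * (1 - of_real \<alpha> * z) / (1 - z\<^sup>2)"

lemma p_alpha_eq_phi_cayley:
  assumes "z \<in> \<E>"
  shows "p_alpha \<alpha> z = of_real (\<alpha> / 2) + (1 / 2) *\<^sub>R phi ((1 - \<alpha>) / 2) ((1 + \<alpha>) / 2) (cayley z)"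
proof -
  define u v where "u = 1 - z" and "v = 1 + z"
  have "u \<noteq> 0" "v \<noteq> 0"
    using assms by (auto simp: unit_disc_def u_def v_def add_eq_0_iff)
  have z: "1 - z\<^sup>2 = u * v" "cayley z = v / u"
    by (simp_all add: u_def v_def cayley_def power2_eq_square algebra_simps)
  have num: "2 * z * (1 - of_real \<alpha> * z) - of_real \<alpha> * (u * v)
      = of_real ((1 - \<alpha>) / 2) * v\<^sup>2 - of_real ((1 + \<alpha>) / 2) * u\<^sup>2"
    by (simp add: u_def v_def power2_eq_square field_simps)
  have "2 * p_alpha \<alpha> z - of_real \<alpha> = (2 * z * (1 - of_real \<alpha> * z) - of_real \<alpha> * (u * v)) / (u * v)"
    using \<open>u \<noteq> 0\<close> \<open>v \<noteq> 0\<close> unfolding p_alpha_def z(1) by (simp add: field_simps)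
  also have "\<dots> = (of_real ((1 - \<alpha>) / 2) * v\<^sup>2 - of_real ((1 + \<alpha>) / 2) * u\<^sup>2) / (u * v)"
    by (simp only: num)
  also have "\<dots> = phi ((1 - \<alpha>) / 2) ((1 + \<alpha>) / 2) (cayley z)"
    using \<open>u \<noteq> 0\<close> \<open>v \<noteq> 0\<close> unfolding z(2) phi_def by (simp add: field_simps power2_eq_square)
  finally show ?thesis
    by (simp add: scaleR_conv_of_real field_simps)
qed

lemma p_alpha_image:
  "p_alpha \<alpha> ` \<E> =
    (\<lambda>w. of_real (\<alpha> / 2) + (1 / 2) *\<^sub>R w) ` phi ((1 - \<alpha>) / 2) ((1 + \<alpha>) / 2) ` {w. 0 < Re w}"
proof -
  have "p_alpha \<alpha> ` \<E> = (\<lambda>w. of_real (\<alpha> / 2) + (1 / 2) *\<^sub>R w) ` phi ((1 - \<alpha>) / 2) ((1 + \<alpha>) / 2) ` cayley ` \<E>"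
    by (simp add: image_image p_alpha_eq_phi_cayley cong: image_cong)
  then show ?thesis
    using bij_betw_cayley by (simp add: bij_betw_def)
qed

lemma inj_on_p_alpha:
  assumes "\<alpha> \<in> {-1..1}"
  shows "inj_on (p_alpha \<alpha>) \<E>"
proof (rule inj_onI)
  fix z1 z2 assume z: "z1 \<in> \<E>" "z2 \<in> \<E>" "p_alpha \<alpha> z1 = p_alpha \<alpha> z2"
  then have "phi ((1 - \<alpha>) / 2) ((1 + \<alpha>) / 2) (cayley z1) = phi ((1 - \<alpha>) / 2) ((1 + \<alpha>) / 2) (cayley z2)"
    by (simp add: p_alpha_eq_phi_cayley)
  moreover have "cayley z1 \<in> {w. 0 < Re w}" "cayley z2 \<in> {w. 0 < Re w}"
    using z(1,2) bij_betw_cayley by (auto dest: bij_betw_apply)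
  moreover have "inj_on (phi ((1 - \<alpha>) / 2) ((1 + \<alpha>) / 2)) {w. 0 < Re w}"
    using assms by (intro inj_on_phi) (auto simp: field_simps)
  ultimately have "cayley z1 = cayley z2"
    by (auto dest: inj_onD)
  then show "z1 = z2"
    using z(1,2) bij_betw_cayley by (auto simp: bij_betw_def dest: inj_onD)
qed

lemma convex_imag_dir_p_alpha:
  assumes "\<alpha> \<in> {-1..1}"
  shows "convex_imag_dir (p_alpha \<alpha> ` \<E>)"
  unfolding p_alpha_image
  using assms by (intro convex_imag_dir_affinity convex_imag_dir_phi_image) (auto simp: field_simps)

section \<open>The shear construction\<close>

lemma Re_dilatation_pos:
  fixes a b :: complex
  assumes "a \<noteq> 0" "norm (b / a) < 1"
  shows "a + b \<noteq> 0" "0 < Re ((a - b) / (a + b))"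
proof -
  have "norm (- (b / a)) < 1"
    using assms(2) by simp
  then have "1 + b / a \<noteq> 0" "0 < Re (cayley (- (b / a)))"
    using cayley_Re_pos by (auto simp: add_eq_0_iff)
  moreover have "a + b = a * (1 + b / a)"
    using assms(1) by (simp add: field_simps)
  ultimately show "a + b \<noteq> 0"
    using assms(1) by simp
  have "cayley (- (b / a)) = ((a - b) / a) / ((a + b) / a)"
    using assms(1) by (simp add: cayley_def diff_divide_distrib add_divide_distrib)
  also have "\<dots> = (a - b) / (a + b)"
    using assms(1) by simp
  finally have "cayley (- (b / a)) = (a - b) / (a + b)" .
  with \<open>0 < Re (cayley (- (b / a)))\<close> show "0 < Re ((a - b) / (a + b))"
    by simp
qed

lemma Im_increasing_on_vertical_segment:
  fixes F :: "complex \<Rightarrow> complex"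
  assumes "s1 < s2"
    and "\<And>s. s1 \<le> s \<Longrightarrow> s \<le> s2 \<Longrightarrow> \<exists>d. (F has_field_derivative d) (at (Complex c s)) \<and> 0 < Re d"
  shows "Im (F (Complex c s1)) < Im (F (Complex c s2))"
proof -
  have "(\<lambda>s. Im (F (Complex c s))) s1 < (\<lambda>s. Im (F (Complex c s))) s2"
  proof (rule DERIV_pos_imp_increasing[OF assms(1)])
    fix s assume "s1 \<le> s" "s \<le> s2"
    then obtain d where d: "(F has_field_derivative d) (at (Complex c s))" "0 < Re d"
      using assms(2) by blast
    have "((\<lambda>s. Complex c s) has_derivative (\<lambda>h. of_real h * \<i>)) (at s)"
      unfolding Complex_eq by (auto intro!: derivative_eq_intros)
    then have "((F \<circ> (\<lambda>s. Complex c s)) has_derivative ((*) d \<circ> (\<lambda>h. of_real h * \<i>))) (at s)"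
      using d(1) by (intro diff_chain_at) (simp_all add: has_field_derivative_def)
    then have "((\<lambda>s. Im (F (Complex c s))) has_derivative (\<lambda>h. Im (d * (of_real h * \<i>)))) (at s)"
      by (auto dest: has_derivative_Im simp: o_def)
    moreover have "(\<lambda>h. Im (d * (of_real h * \<i>))) = (*) (Re d)"
      by (auto simp: fun_eq_iff)
    ultimately show "\<exists>y. ((\<lambda>s. Im (F (Complex c s))) has_real_derivative y) (at s) \<and> 0 < y"
      using d(2) by (auto simp: has_field_derivative_def)
  qed
  then show ?thesis
    by simp
qed

locale shear =
  fixes H G :: "complex \<Rightarrow> complex"
  assumes holomorphic_H: "H holomorphic_on \<E>" and holomorphic_G: "G holomorphic_on \<E>"
    and sense_preserving: "loc_univ_sense_pres H G"
    and inj_on_sum: "inj_on (\<lambda>z. H z + G z) \<E>"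
    and convex_imag_dir_sum: "convex_imag_dir ((\<lambda>z. H z + G z) ` \<E>)"
begin

definition P :: "complex \<Rightarrow> complex" where
  "P z = H z + G z"

definition V :: "complex \<Rightarrow> complex" where
  "V \<zeta> = H (inv_into \<E> P \<zeta>) - G (inv_into \<E> P \<zeta>)"

lemma inj_on_P: "inj_on P \<E>"
  using inj_on_sum by (simp add: P_def [abs_def])

lemma convex_imag_dir_P: "convex_imag_dir (P ` \<E>)"
  using convex_imag_dir_sum by (simp add: P_def [abs_def])

lemma harm_eq:
  assumes "z \<in> \<E>"
  shows "harm H G z = Complex (Re (P z)) (Im (V (P z)))"
proof -
  have "V (P z) = H z - G z"
    unfolding V_def using assms inj_on_P by simp
  then show ?thesis
    by (simp add: harm_def P_def complex_eq_iff)
qed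

lemma V_has_field_derivative:
  assumes "z \<in> \<E>"
  shows "(V has_field_derivative (deriv H z - deriv G z) / (deriv H z + deriv G z)) (at (P z))"
    and "0 < Re ((deriv H z - deriv G z) / (deriv H z + deriv G z))"
proof -
  have open_E: "open \<E>"
    by (simp add: unit_disc_def)
  have dH: "(H has_field_derivative deriv H z) (at z)" and dG: "(G has_field_derivative deriv G z) (at z)"
    using holomorphic_derivI[OF holomorphic_H open_E assms] holomorphic_derivI[OF holomorphic_G open_E assms]
    by simp_all
  have "deriv H z \<noteq> 0" "norm (deriv G z / deriv H z) < 1"
    using sense_preserving assms unfolding loc_univ_sense_pres_def by auto
  note dilatation = Re_dilatation_pos[OF this]
  have "(inv_into \<E> P has_field_derivative inverse (deriv H z + deriv G z)) (at (P z))"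
  proof (rule has_field_derivative_inverse_strong[OF _ dilatation(1) open_E assms])
    show "(P has_field_derivative deriv H z + deriv G z) (at z)"
      unfolding P_def [abs_def] using dH dG by (rule DERIV_add)
    show "continuous_on \<E> P"
      unfolding P_def [abs_def] using holomorphic_H holomorphic_G
      by (intro continuous_intros holomorphic_on_imp_continuous_on)
  qed (use inj_on_P in simp)
  moreover have "((\<lambda>w. H w - G w) has_field_derivative deriv H z - deriv G z) (at (inv_into \<E> P (P z)))"
    using dH dG inj_on_P assms by (simp add: DERIV_diff)
  ultimately show "(V has_field_derivative (deriv H z - deriv G z) / (deriv H z + deriv G z)) (at (P z))"
    unfolding V_def divide_inverse by (rule DERIV_chain2 [rotated])
  show "0 < Re ((deriv H z - deriv G z) / (deriv H z + deriv G z))"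
    by (fact dilatation(2))
qed

lemma Im_V_strict_mono:
  assumes "\<zeta>1 \<in> P ` \<E>" "\<zeta>2 \<in> P ` \<E>" "Re \<zeta>1 = Re \<zeta>2" "Im \<zeta>1 < Im \<zeta>2"
  shows "Im (V \<zeta>1) < Im (V \<zeta>2)"
proof -
  have "Im (V (Complex (Re \<zeta>1) (Im \<zeta>1))) < Im (V (Complex (Re \<zeta>1) (Im \<zeta>2)))"
  proof (rule Im_increasing_on_vertical_segment[OF assms(4)])
    fix s assume "Im \<zeta>1 \<le> s" "s \<le> Im \<zeta>2"
    then have "Complex (Re \<zeta>1) s \<in> P ` \<E>"
      by (rule convex_imag_dir_vertical_between[OF convex_imag_dir_P assms(1-3)])
    then obtain z where "z \<in> \<E>" "P z = Complex (Re \<zeta>1) s"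
      by auto
    with V_has_field_derivative[of z]
    show "\<exists>d. (V has_field_derivative d) (at (Complex (Re \<zeta>1) s)) \<and> 0 < Re d"
      by auto
  qed
  moreover have "Complex (Re \<zeta>1) (Im \<zeta>1) = \<zeta>1" "Complex (Re \<zeta>1) (Im \<zeta>2) = \<zeta>2"
    using assms(3) by (simp_all add: complex_eq_iff)
  ultimately show ?thesis
    by metis
qed

lemma inj_on_harm: "inj_on (harm H G) \<E>"
proof (rule inj_onI)
  fix z1 z2 assume z: "z1 \<in> \<E>" "z2 \<in> \<E>" "harm H G z1 = harm H G z2"
  then have re: "Re (P z1) = Re (P z2)" and "Im (V (P z1)) = Im (V (P z2))"
    using harm_eq by (metis complex.inject)+
  with Im_V_strict_mono z(1,2) have "Im (P z1) = Im (P z2)"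
    by (metis imageI linorder_neqE_linordered_idom order_less_irrefl)
  with re have "P z1 = P z2"
    by (simp add: complex_eq_iff)
  with inj_on_P z(1,2) show "z1 = z2"
    by (auto dest: inj_onD)
qed

lemma convex_imag_dir_harm_image: "convex_imag_dir (harm H G ` \<E>)"
  unfolding convex_imag_dir_def
proof
  fix x
  define M where "M \<zeta> = Complex (Re \<zeta>) (Im (V \<zeta>))" for \<zeta>
  have slice: "harm H G ` \<E> \<inter> {w. Re w = x} = M ` (P ` \<E> \<inter> {w. Re w = x})"
    using harm_eq by (force simp: M_def)
  have "continuous_on (P ` \<E>) V"
    using V_has_field_derivative by (intro continuous_at_imp_continuous_on) (auto dest: DERIV_isCont)
  then have "continuous_on (P ` \<E> \<inter> {w. Re w = x}) M"
    unfolding M_def Complex_eq by (intro continuous_intros) (auto intro: continuous_on_subset)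
  moreover have "connected (P ` \<E> \<inter> {w. Re w = x})"
    using convex_imag_dir_P unfolding convex_imag_dir_def by blast
  ultimately show "connected (harm H G ` \<E> \<inter> {w. Re w = x})"
    unfolding slice by (rule connected_continuous_image)
qed

end

section \<open>Convex combinations\<close>

lemma sum_convex_combination_eq_p_alpha:
  assumes "\<forall>z\<in>\<E>. h1 z + g1 z = p_alpha \<alpha>1 z" "\<forall>z\<in>\<E>. h2 z + g2 z = p_alpha \<alpha>2 z" "z \<in> \<E>"
  shows "(of_real t * h1 z + of_real (1 - t) * h2 z) + (of_real t * g1 z + of_real (1 - t) * g2 z)
    = p_alpha (t * \<alpha>1 + (1 - t) * \<alpha>2) z"
proof -
  have "(of_real t * h1 z + of_real (1 - t) * h2 z) + (of_real t * g1 z + of_real (1 - t) * g2 z)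
      = of_real t * (h1 z + g1 z) + of_real (1 - t) * (h2 z + g2 z)"
    by (simp add: algebra_simps)
  also have "\<dots> = of_real t * p_alpha \<alpha>1 z + of_real (1 - t) * p_alpha \<alpha>2 z"
    using assms by simp
  also have "\<dots> = p_alpha (t * \<alpha>1 + (1 - t) * \<alpha>2) z"
    unfolding p_alpha_def times_divide_eq_right add_divide_distrib [symmetric]
    by (simp add: algebra_simps)
  finally show ?thesis .
qed

lemma in_S_H_convex_combination:
  fixes h1 g1 h2 g2 :: "complex \<Rightarrow> complex" and t :: real
  assumes "in_S_H h1 g1" "in_S_H h2 g2"
    and "loc_univ_sense_pres (\<lambda>z. of_real t * h1 z + of_real (1 - t) * h2 z)
                             (\<lambda>z. of_real t * g1 z + of_real (1 - t) * g2 z)"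
    and "inj_on (harm (\<lambda>z. of_real t * h1 z + of_real (1 - t) * h2 z)
                      (\<lambda>z. of_real t * g1 z + of_real (1 - t) * g2 z)) \<E>"
  shows "in_S_H (\<lambda>z. of_real t * h1 z + of_real (1 - t) * h2 z)
                (\<lambda>z. of_real t * g1 z + of_real (1 - t) * g2 z)"
proof -
  have hol: "h1 holomorphic_on \<E>" "g1 holomorphic_on \<E>" "h2 holomorphic_on \<E>" "g2 holomorphic_on \<E>"
    and norm: "harm h1 g1 0 = 0" "harm h2 g2 0 = 0" "deriv h1 0 = 1" "deriv h2 0 = 1"
    using assms(1,2) unfolding in_S_H_def by auto
  have "0 \<in> \<E>" "open \<E>"
    by (simp_all add: unit_disc_def)
  then have "((\<lambda>z. of_real t * h1 z + of_real (1 - t) * h2 z)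
      has_field_derivative of_real t * deriv h1 0 + of_real (1 - t) * deriv h2 0) (at 0)"
    by (intro DERIV_add DERIV_cmult holomorphic_derivI[OF hol(1)] holomorphic_derivI[OF hol(3)])
  then have "deriv (\<lambda>z. of_real t * h1 z + of_real (1 - t) * h2 z) 0 = 1"
    using norm by (simp add: DERIV_imp_deriv)
  moreover have "harm (\<lambda>z. of_real t * h1 z + of_real (1 - t) * h2 z)
      (\<lambda>z. of_real t * g1 z + of_real (1 - t) * g2 z) 0
      = of_real t * harm h1 g1 0 + of_real (1 - t) * harm h2 g2 0"
    by (simp add: harm_def algebra_simps)
  then have "harm (\<lambda>z. of_real t * h1 z + of_real (1 - t) * h2 z)
      (\<lambda>z. of_real t * g1 z + of_real (1 - t) * g2 z) 0 = 0"
    using norm by simp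
  ultimately show ?thesis
    using assms(3,4) hol unfolding in_S_H_def by (auto intro!: holomorphic_intros)
qed

theorem theorem2p1:
  fixes h1 g1 h2 g2 :: "complex \<Rightarrow> complex" and \<alpha>1 \<alpha>2 t :: real
  assumes "\<alpha>1 \<in> {-1..1}" and "\<alpha>2 \<in> {-1..1}"
    and "in_S_H h1 g1" and "in_S_H h2 g2"
    and "\<forall>z\<in>\<E>. h1 z + g1 z = z * (1 - of_real \<alpha>1 * z) / (1 - z\<^sup>2)"
    and "\<forall>z\<in>\<E>. h2 z + g2 z = z * (1 - of_real \<alpha>2 * z) / (1 - z\<^sup>2)"
    and "0 \<le> t" and "t \<le> 1"
    and "loc_univ_sense_pres (\<lambda>z. of_real t * h1 z + of_real (1 - t) * h2 z)
                             (\<lambda>z. of_real t * g1 z + of_real (1 - t) * g2 z)"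
  shows "in_S_H (\<lambda>z. of_real t * h1 z + of_real (1 - t) * h2 z)
                (\<lambda>z. of_real t * g1 z + of_real (1 - t) * g2 z)
       \<and> convex_imag_dir (harm (\<lambda>z. of_real t * h1 z + of_real (1 - t) * h2 z)
                               (\<lambda>z. of_real t * g1 z + of_real (1 - t) * g2 z) ` \<E>)"
proof -
  define H where "H z = of_real t * h1 z + of_real (1 - t) * h2 z" for z
  define G where "G z = of_real t * g1 z + of_real (1 - t) * g2 z" for z
  define \<alpha> where "\<alpha> = t * \<alpha>1 + (1 - t) * \<alpha>2"
  have \<alpha>: "\<alpha> \<in> {-1..1}"
    using convexD[of "{-1..1 :: real}" \<alpha>1 \<alpha>2 t "1 - t"] assms(1,2,7,8) by (simp add: \<alpha>_def)
  have sum: "H z + G z = p_alpha \<alpha> z" if "z \<in> \<E>" for z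
    using sum_convex_combination_eq_p_alpha[OF assms(5,6)[folded p_alpha_def] that]
    by (simp add: H_def G_def \<alpha>_def)
  have "inj_on (\<lambda>z. H z + G z) \<E> \<longleftrightarrow> inj_on (p_alpha \<alpha>) \<E>"
    by (rule inj_on_cong) (rule sum)
  moreover have "(\<lambda>z. H z + G z) ` \<E> = p_alpha \<alpha> ` \<E>"
    by (rule image_cong) (simp_all add: sum)
  ultimately have "inj_on (\<lambda>z. H z + G z) \<E>" "convex_imag_dir ((\<lambda>z. H z + G z) ` \<E>)"
    using inj_on_p_alpha[OF \<alpha>] convex_imag_dir_p_alpha[OF \<alpha>] by simp_all
  moreover have "H holomorphic_on \<E>" "G holomorphic_on \<E>"
    using assms(3,4) unfolding H_def [abs_def] G_def [abs_def] in_S_H_def by (auto intro!: holomorphic_intros)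
  ultimately interpret shear H G
    using assms(9) by unfold_locales (simp_all add: H_def [abs_def] G_def [abs_def])
  show ?thesis
    using inj_on_harm convex_imag_dir_harm_image in_S_H_convex_combination[OF assms(3,4,9)]
    by (simp add: H_def [abs_def] G_def [abs_def])
qed

end
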